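(* Let $f:\mathbb{R}\to\mathbb{R}$ be Abel continuous, and let $(p_n)$ be a sequence of real numbers which is slowly oscillating and Abel convergent. Then $(f(p_n))$ is a convergent sequence.
   Context: A sequence $(p_n)$ of real numbers is Abel convergent to $\ell$ if $\sum_{k=0}^{\infty}p_k x^k$ converges for every $0\le x<1$ and $\lim_{x\to 1^-}(1-x)\sum_{k=0}^{\infty}p_k x^k=\ell$. $f$ is Abel continuous if for every sequence $(p_n)$ Abel convergent to some $\ell$, $(f(p_n))$ is Abel convergent to $f(\ell)$. A sequence $(p_n)$ is slowly oscillating if for every $\varepsilon>0$ there exist $\delta>0$ and a positive integer $N$ such that $|p_m-p_n|<\varepsilon$ whenever $n\ge N$ and $n\le m\le(1+\delta)n$. *)

theory Defs
  imports "HOL-Analysis.Analysis"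
begin

definition abel_convergent_to :: "(nat \<Rightarrow> real) \<Rightarrow> real \<Rightarrow> bool" where
  "abel_convergent_to p l \<longleftrightarrow>
     (\<forall>x::real. 0 \<le> x \<and> x < 1 \<longrightarrow> summable (\<lambda>k. p k * x ^ k)) \<and>
     ((\<lambda>x. (1 - x) * (\<Sum>k. p k * x ^ k)) \<longlongrightarrow> l) (at_left 1)"

definition abel_convergent :: "(nat \<Rightarrow> real) \<Rightarrow> bool" where
  "abel_convergent p \<longleftrightarrow> (\<exists>l. abel_convergent_to p l)"

definition abel_continuous :: "(real \<Rightarrow> real) \<Rightarrow> bool" where
  "abel_continuous f \<longleftrightarrow>
     (\<forall>p l. abel_convergent_to p l \<longrightarrow> abel_convergent_to (\<lambda>n. f (p n)) (f l))"

definition slowly_oscillating :: "(nat \<Rightarrow> real) \<Rightarrow> bool" where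
  "slowly_oscillating p \<longleftrightarrow>
     (\<forall>\<epsilon>>0. \<exists>\<delta>>0. \<exists>N::nat. N > 0 \<and>
        (\<forall>n m. n \<ge> N \<and> n \<le> m \<and> real m \<le> (1 + \<delta>) * real n \<longrightarrow> \<bar>p m - p n\<bar> < \<epsilon>))"

end

theory Submission
  imports Defs
begin

text \<open>
  Abel continuity already forces continuity: if \<open>z\<^sub>n \<rightarrow> y\<close>, every subsequence of \<open>f(z\<^sub>n)\<close> is
  Abel convergent to \<open>f(y)\<close>, and Abel limits respect bounds holding for all terms, so
  \<open>f(z\<^sub>n) \<rightarrow> f(y)\<close>. Hence it suffices to show the Tauberian theorem that a slowly oscillating,
  Abel convergent sequence \<open>s\<close> converges.

  Chaining steps of ratio \<open>1 + \<delta>\<close>, slow oscillation gives \<open>|s\<^sub>n - s\<^sub>k| \<le> C sqrt(n/k)\<close> for large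
  \<open>k \<le> n\<close>; comparing with the Abel mean at \<open>x = 1 - 1/n\<close> this shows that \<open>s\<close> is bounded.
  For bounded \<open>s\<close> with Abel limit \<open>l\<close> and continuous \<open>g\<close> on \<open>[0,1]\<close>, the weighted means
  \<open>(1-x) \<Sum> s\<^sub>k g(x\<^sup>k) x\<^sup>k\<close> and \<open>l (1-x) \<Sum> g(x\<^sup>k) x\<^sup>k\<close> have the same limit as \<open>x \<rightarrow> 1\<close>:
  for the monomial \<open>g(t) = t\<^sup>i\<close> this is the Abel limit taken at \<open>x^(i+1)\<close>, and Weierstrass
  approximation does the rest. Choosing \<open>g(e^(-u))\<close> a tent supported in \<open>1 < u < 1 + \<delta>\<close> and
  \<open>x = e^(-1/n)\<close>, the weighted mean only sees the \<open>s\<^sub>k\<close> with \<open>n < k < (1 + \<delta>) n\<close>, all of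
  which are close to \<open>s\<^sub>n\<close>.
\<close>

definition abel_mean :: "(nat \<Rightarrow> real) \<Rightarrow> real \<Rightarrow> real" where
  "abel_mean s x = (1 - x) * (\<Sum>k. s k * x ^ k)"

lemma abel_convergent_to_iff:
  "abel_convergent_to s l \<longleftrightarrow>
     (\<forall>x. 0 \<le> x \<and> x < 1 \<longrightarrow> summable (\<lambda>k. s k * x ^ k)) \<and> (abel_mean s \<longlongrightarrow> l) (at_left 1)"
  unfolding abel_convergent_to_def abel_mean_def ..

lemma eventually_at_left_1: "eventually (\<lambda>x::real. 0 < x \<and> x < 1) (at_left 1)"
  using eventually_at_left_real[of 0 1] by simp

lemma summable_geometric_mult:
  fixes x c :: real
  assumes "0 \<le> x" "x < 1"
  shows "summable (\<lambda>k. c * x ^ k)"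
  using assms by (intro summable_mult summable_geometric) simp

lemma abel_mean_const:
  assumes "0 \<le> x" "x < 1"
  shows "abel_mean (\<lambda>_. c) x = c"
  using assms by (simp add: abel_mean_def suminf_mult suminf_geometric)

lemma abel_mean_diff:
  assumes "summable (\<lambda>k. a k * x ^ k)" "summable (\<lambda>k. b k * x ^ k)"
  shows "abel_mean a x - abel_mean b x = abel_mean (\<lambda>k. a k - b k) x"
proof -
  have "(\<Sum>k. (a k - b k) * x ^ k) = (\<Sum>k. a k * x ^ k) - (\<Sum>k. b k * x ^ k)"
    using suminf_diff[OF assms] by (simp add: left_diff_distrib)
  then show ?thesis by (metis abel_mean_def right_diff_distrib)
qed

lemma abel_mean_abs_le:
  assumes "\<And>k. \<bar>a k\<bar> \<le> b k" "summable (\<lambda>k. b k * x ^ k)" "0 \<le> x" "x < 1"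
  shows "summable (\<lambda>k. a k * x ^ k)" "\<bar>abel_mean a x\<bar> \<le> abel_mean b x"
proof -
  have le: "\<bar>a k * x ^ k\<bar> \<le> b k * x ^ k" for k
    using assms by (simp add: abs_mult mult_right_mono)
  have abs_summable: "summable (\<lambda>k. \<bar>a k * x ^ k\<bar>)"
    by (rule summable_comparison_test'[OF assms(2)]) (use le in simp)
  show "summable (\<lambda>k. a k * x ^ k)"
    by (rule summable_comparison_test'[OF assms(2)]) (use le in simp)
  have "\<bar>\<Sum>k. a k * x ^ k\<bar> \<le> (\<Sum>k. b k * x ^ k)"
    using summable_rabs[OF abs_summable] suminf_le[OF le abs_summable assms(2)] by linarith
  then show "\<bar>abel_mean a x\<bar> \<le> abel_mean b x"
    using assms(3,4) by (simp add: abel_mean_def abs_mult mult_left_mono)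
qed

lemma abel_mean_bounded:
  assumes "\<And>k. \<bar>a k\<bar> \<le> B" "0 \<le> x" "x < 1"
  shows "summable (\<lambda>k. a k * x ^ k)" "\<bar>abel_mean a x\<bar> \<le> B"
  using abel_mean_abs_le[of a "\<lambda>_. B", OF assms(1) summable_geometric_mult assms(2,3)]
    abel_mean_const[OF assms(2,3)] assms by auto

lemma abel_mean_affine:
  assumes "summable (\<lambda>k. w k * x ^ k)" "0 \<le> x" "x < 1"
  shows "summable (\<lambda>k. (a + b * w k) * x ^ k)" "abel_mean (\<lambda>k. a + b * w k) x = a + b * abel_mean w x"
proof -
  have "(\<lambda>k. a * x ^ k + b * (w k * x ^ k)) sums ((\<Sum>k. a * x ^ k) + b * (\<Sum>k. w k * x ^ k))"
    using assms by (intro sums_add sums_mult summable_sums summable_geometric_mult)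
  then have "(\<lambda>k. (a + b * w k) * x ^ k) sums (a / (1 - x) + b * (\<Sum>k. w k * x ^ k))"
    using assms by (simp add: algebra_simps suminf_mult suminf_geometric)
  then show "summable (\<lambda>k. (a + b * w k) * x ^ k)" "abel_mean (\<lambda>k. a + b * w k) x = a + b * abel_mean w x"
    using assms by (auto simp: sums_iff abel_mean_def field_simps)
qed

lemma abel_convergent_to_const: "abel_convergent_to (\<lambda>_. c) c"
  unfolding abel_convergent_to_iff
proof (intro conjI allI impI)
  show "summable (\<lambda>k. c * x ^ k)" if "0 \<le> x \<and> x < 1" for x :: real
    using that by (simp add: summable_geometric_mult)
  have "eventually (\<lambda>x. c = abel_mean (\<lambda>_. c) x) (at_left 1)"
    using eventually_at_left_1 by eventually_elim (simp add: abel_mean_const)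
  then show "(abel_mean (\<lambda>_. c) \<longlongrightarrow> c) (at_left 1)"
    by (rule Lim_transform_eventually[OF tendsto_const])
qed

lemma abel_convergent_to_mono:
  assumes "abel_convergent_to a A" "abel_convergent_to b B" "\<And>k. a k \<le> b k"
  shows "A \<le> B"
proof (rule tendsto_le)
  show "(abel_mean b \<longlongrightarrow> B) (at_left 1)" "(abel_mean a \<longlongrightarrow> A) (at_left 1)"
    using assms(1,2) by (simp_all add: abel_convergent_to_iff)
  show "eventually (\<lambda>x. abel_mean a x \<le> abel_mean b x) (at_left 1)"
    using eventually_at_left_1
  proof eventually_elim
    case (elim x)
    have "summable (\<lambda>k. (b k - a k) * x ^ k)"
      using summable_diff[of "\<lambda>k. b k * x ^ k" "\<lambda>k. a k * x ^ k"] assms elim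
      by (simp add: abel_convergent_to_iff left_diff_distrib)
    then have "\<bar>abel_mean (\<lambda>k. b k - a k) x\<bar> \<le> abel_mean (\<lambda>k. b k - a k) x"
      using assms(3) elim by (intro abel_mean_abs_le(2)) auto
    moreover have "abel_mean b x - abel_mean a x = abel_mean (\<lambda>k. b k - a k) x"
      by (rule abel_mean_diff) (use assms elim in \<open>auto simp: abel_convergent_to_iff\<close>)
    ultimately show ?case by linarith
  qed
qed simp

lemma abel_mean_tendsto_zero:
  assumes "t \<longlonglongrightarrow> 0"
  shows "(abel_mean t \<longlongrightarrow> 0) (at_left 1)"
proof (rule tendstoI)
  fix e :: real assume "e > 0"
  then obtain K where K: "\<And>k. k \<ge> K \<Longrightarrow> \<bar>t k\<bar> < e / 2"
    using LIMSEQ_D[OF assms, of "e / 2"] by auto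
  define head where "head k = (if k < K then t k else 0)" for k
  define tail where "tail k = (if k < K then 0 else t k)" for k
  have "((\<lambda>x. (1 - x) * (\<Sum>k<K. t k * x ^ k)) \<longlongrightarrow> (1 - 1) * (\<Sum>k<K. t k * 1 ^ k)) (at_left 1)"
    by (intro tendsto_intros)
  then have "eventually (\<lambda>x. \<bar>(1 - x) * (\<Sum>k<K. t k * x ^ k)\<bar> < e / 2) (at_left (1::real))"
    using \<open>e > 0\<close> by (auto dest!: tendstoD[of _ _ _ "e / 2"] simp: dist_real_def)
  with eventually_at_left_1 show "eventually (\<lambda>x. dist (abel_mean t x) 0 < e) (at_left 1)"
  proof eventually_elim
    case (elim x)
    have head_sum: "(\<Sum>k. head k * x ^ k) = (\<Sum>k<K. t k * x ^ k)"
      by (subst suminf_finite[of "{..<K}"]) (auto simp: head_def)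
    have head_summable: "summable (\<lambda>k. head k * x ^ k)"
      by (rule summable_finite[of "{..<K}"]) (auto simp: head_def)
    have tail_bound: "\<bar>tail k\<bar> \<le> e / 2" for k
      using K[of k] \<open>e > 0\<close> by (auto simp: tail_def)
    have tail: "summable (\<lambda>k. tail k * x ^ k)" "\<bar>abel_mean tail x\<bar> \<le> e / 2"
      using abel_mean_bounded[of tail "e / 2" x] tail_bound elim by auto
    have "t k * x ^ k = head k * x ^ k + tail k * x ^ k" for k
      by (simp add: head_def tail_def)
    then have "(\<Sum>k. t k * x ^ k) = (\<Sum>k. head k * x ^ k) + (\<Sum>k. tail k * x ^ k)"
      using suminf_add[OF head_summable tail(1)] by simp
    then have "abel_mean t x = abel_mean head x + abel_mean tail x"
      by (simp add: abel_mean_def distrib_left)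
    then show ?case using elim tail(2)
      by (simp add: dist_real_def abel_mean_def head_sum)
  qed
qed

lemma abel_convergent_to_if_LIMSEQ:
  assumes "s \<longlonglongrightarrow> c"
  shows "abel_convergent_to s c"
  unfolding abel_convergent_to_iff
proof (intro conjI allI impI)
  have "Bseq s"
    using assms by (rule convergent_imp_Bseq[OF convergentI])
  then obtain M where M: "\<And>k. \<bar>s k\<bar> \<le> M"
    unfolding Bseq_def by auto
  show summable: "summable (\<lambda>k. s k * x ^ k)" if "0 \<le> x \<and> x < 1" for x :: real
    using that by (intro abel_mean_bounded(1)[OF M]) auto
  have lim: "((\<lambda>x. c + abel_mean (\<lambda>k. s k - c) x) \<longlongrightarrow> c + 0) (at_left 1)"
    by (intro tendsto_add tendsto_const abel_mean_tendsto_zero LIM_zero assms)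
  have eq: "eventually (\<lambda>x. c + abel_mean (\<lambda>k. s k - c) x = abel_mean s x) (at_left 1)"
    using eventually_at_left_1
  proof eventually_elim
    case (elim x)
    then show ?case
      using abel_mean_diff[of s x "\<lambda>_. c"] abel_mean_const[of x c] summable[of x]
        summable_geometric_mult[of x c] by simp
  qed
  show "(abel_mean s \<longlongrightarrow> c) (at_left 1)"
    using Lim_transform_eventually[OF lim eq] by simp
qed

lemma LIMSEQ_if_abel_convergent_subseq:
  assumes "\<And>r. strict_mono r \<Longrightarrow> abel_convergent_to (a \<circ> r) L"
  shows "a \<longlonglongrightarrow> L"
proof (rule order_tendstoI)
  fix y assume "L < y"
  show "eventually (\<lambda>n. a n < y) sequentially"
  proof (rule ccontr)
    assume "\<not> ?thesis"
    then obtain r :: "nat \<Rightarrow> nat" where "strict_mono r" "\<And>n. \<not> a (r n) < y"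
      using not_eventually_sequentiallyD by blast
    then have "y \<le> L"
      using abel_convergent_to_mono[OF abel_convergent_to_const assms] by (simp add: not_less)
    with \<open>L < y\<close> show False by simp
  qed
next
  fix y assume "y < L"
  show "eventually (\<lambda>n. y < a n) sequentially"
  proof (rule ccontr)
    assume "\<not> ?thesis"
    then obtain r :: "nat \<Rightarrow> nat" where "strict_mono r" "\<And>n. \<not> y < a (r n)"
      using not_eventually_sequentiallyD by blast
    then have "L \<le> y"
      using abel_convergent_to_mono[OF assms abel_convergent_to_const] by (simp add: not_less)
    with \<open>y < L\<close> show False by simp
  qed
qed

lemma isCont_if_abel_continuous:
  assumes "abel_continuous f"
  shows "isCont f y"
proof (rule continuous_at_sequentiallyI)
  fix u assume "u \<longlonglongrightarrow> y"
  show "(\<lambda>n. f (u n)) \<longlonglongrightarrow> f y"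
  proof (rule LIMSEQ_if_abel_convergent_subseq)
    fix r :: "nat \<Rightarrow> nat" assume "strict_mono r"
    then have "abel_convergent_to (u \<circ> r) y"
      using LIMSEQ_subseq_LIMSEQ[OF \<open>u \<longlonglongrightarrow> y\<close>] by (intro abel_convergent_to_if_LIMSEQ)
    then show "abel_convergent_to ((\<lambda>n. f (u n)) \<circ> r) (f y)"
      using assms unfolding abel_continuous_def by (auto simp: comp_def)
  qed
qed

lemma sqrt_growth_if_geometric_steps:
  fixes p :: "nat \<Rightarrow> real"
  assumes near: "\<And>k n. N \<le> k \<Longrightarrow> k \<le> n \<Longrightarrow> real n \<le> \<rho> * real k \<Longrightarrow> \<bar>p n - p k\<bar> < 1"
    and far: "\<And>k n. N \<le> k \<Longrightarrow> \<rho> * real k < real n \<Longrightarrow>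
      \<exists>m. k < m \<and> m < n \<and> \<sigma>\<^sup>2 * real k \<le> real m \<and> \<bar>p m - p k\<bar> < 1"
    and "\<sigma> > 1" "N > 0" "N \<le> k" "k \<le> n"
  shows "\<bar>p n - p k\<bar> \<le> (2 + \<sigma> / (\<sigma> - 1)) * sqrt (real n / real k) - 1"
  using \<open>N \<le> k\<close> \<open>k \<le> n\<close>
proof (induction "n - k" arbitrary: k rule: less_induct)
  case less
  define C where "C = 2 + \<sigma> / (\<sigma> - 1)"
  have "C \<ge> 2" using \<open>\<sigma> > 1\<close> by (simp add: C_def)
  have "real k > 0" using less.prems \<open>N > 0\<close> by simp
  then have ratio: "sqrt (real n / real k) \<ge> 1" using less.prems by simp
  show ?case
    unfolding C_def[symmetric]
  proof (cases "real n \<le> \<rho> * real k")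
    case True
    then have "\<bar>p n - p k\<bar> < 1" using near less.prems by simp
    moreover have "C * 1 \<le> C * sqrt (real n / real k)"
      using ratio \<open>C \<ge> 2\<close> by (intro mult_left_mono) auto
    ultimately show "\<bar>p n - p k\<bar> \<le> C * sqrt (real n / real k) - 1" using \<open>C \<ge> 2\<close> by linarith
  next
    case False
    then obtain m where m: "k < m" "m < n" "\<sigma>\<^sup>2 * real k \<le> real m" "\<bar>p m - p k\<bar> < 1"
      using far less.prems by (meson not_le)
    have IH: "\<bar>p n - p m\<bar> \<le> C * sqrt (real n / real m) - 1"
      using less.hyps[of m] m less.prems by (simp add: C_def)
    have "C * (1 - 1 / \<sigma>) = 2 * (1 - 1 / \<sigma>) + 1"
      using \<open>\<sigma> > 1\<close> by (simp add: C_def field_simps)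
    moreover have "1 / \<sigma> < 1" using \<open>\<sigma> > 1\<close> by simp
    ultimately have "C * (1 - 1 / \<sigma>) \<ge> 1" by argo
    then have "C * (1 - 1 / \<sigma>) * sqrt (real n / real k) \<ge> 1"
      using ratio by (metis mult_mono' mult_1 zero_le_one)
    have "sqrt (real n / real m) \<le> sqrt (real n / (\<sigma>\<^sup>2 * real k))"
      using m \<open>real k > 0\<close> \<open>\<sigma> > 1\<close> by (intro real_sqrt_le_mono divide_left_mono) auto
    also have "\<dots> = sqrt (real n / real k) / \<sigma>"
      using \<open>\<sigma> > 1\<close> by (simp add: real_sqrt_divide real_sqrt_mult)
    finally have "C * sqrt (real n / real m) \<le> C * (sqrt (real n / real k) / \<sigma>)"
      using \<open>C \<ge> 2\<close> by (intro mult_left_mono) auto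
    then show "\<bar>p n - p k\<bar> \<le> C * sqrt (real n / real k) - 1"
      using IH m(4) \<open>C * (1 - 1 / \<sigma>) * sqrt (real n / real k) \<ge> 1\<close> by (simp add: algebra_simps)
  qed
qed

lemma slowly_oscillating_sqrt_growth:
  assumes "slowly_oscillating p"
  obtains C N where "C > 0" "N > 0"
    "\<And>k n. N \<le> k \<Longrightarrow> k \<le> n \<Longrightarrow> \<bar>p n - p k\<bar> \<le> C * sqrt (real n / real k)"
proof -
  obtain \<delta> N0 where \<delta>: "\<delta> > 0" and "N0 > (0::nat)" and
    step: "\<And>k m. N0 \<le> k \<Longrightarrow> k \<le> m \<Longrightarrow> real m \<le> (1 + \<delta>) * real k \<Longrightarrow> \<bar>p m - p k\<bar> < 1"
    using assms unfolding slowly_oscillating_def by (meson zero_less_one)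
  define N where "N = max N0 (nat \<lceil>2 / \<delta>\<rceil>)"
  define \<sigma> where "\<sigma> = sqrt (1 + \<delta> / 2)"
  have "N > 0" "N0 \<le> N" using \<open>N0 > 0\<close> by (auto simp: N_def)
  have "real N \<ge> 2 / \<delta>" unfolding N_def by linarith
  then have N\<delta>: "real N * \<delta> \<ge> 2" using \<delta> by (simp add: field_simps)
  have "\<sigma> > 1" using \<delta> by (simp add: \<sigma>_def)
  have far: "\<exists>m. k < m \<and> m < n \<and> \<sigma>\<^sup>2 * real k \<le> real m \<and> \<bar>p m - p k\<bar> < 1"
    if "N \<le> k" "(1 + \<delta>) * real k < real n" for k n
  proof -
    define m where "m = nat \<lfloor>(1 + \<delta>) * real k\<rfloor>"
    have m_floor: "real m = of_int \<lfloor>(1 + \<delta>) * real k\<rfloor>"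
      using \<delta> by (simp add: m_def)
    have "real m \<le> (1 + \<delta>) * real k" "(1 + \<delta>) * real k < real m + 1"
      unfolding m_floor by linarith+
    moreover have "real k * \<delta> \<ge> 2"
      using N\<delta> \<delta> \<open>N \<le> k\<close> by (smt (verit) mult_right_mono of_nat_mono)
    moreover have "\<sigma>\<^sup>2 = 1 + \<delta> / 2" using \<delta> by (simp add: \<sigma>_def)
    ultimately have "\<sigma>\<^sup>2 * real k \<le> real m" "m < n" "k < m"
      using that \<delta> \<open>N > 0\<close> by (auto simp: algebra_simps)
    moreover have "\<bar>p m - p k\<bar> < 1"
      using step \<open>real m \<le> _\<close> \<open>k < m\<close> \<open>N0 \<le> N\<close> \<open>N \<le> k\<close> by simp
    ultimately show ?thesis by blast
  qed
  show ?thesis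
  proof (rule that)
    have "\<sigma> / (\<sigma> - 1) > 0" using \<open>\<sigma> > 1\<close> by simp
    then show "2 + \<sigma> / (\<sigma> - 1) > 0" by linarith
    show "N > 0" by fact
    show "\<bar>p n - p k\<bar> \<le> (2 + \<sigma> / (\<sigma> - 1)) * sqrt (real n / real k)" if "N \<le> k" "k \<le> n" for k n
      using sqrt_growth_if_geometric_steps[of N "1 + \<delta>" p \<sigma> k n] step \<open>N0 \<le> N\<close> far \<open>\<sigma> > 1\<close> \<open>N > 0\<close> that
      by fastforce
  qed
qed

lemma sum_inverse_sqrt_le: "(\<Sum>k\<le>n. 1 / sqrt (real (max k 1))) \<le> 1 + 2 * sqrt (real n)"
proof (induction n)
  case (Suc n)
  define a where "a = sqrt (real (Suc n))"
  define b where "b = sqrt (real n)"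
  have "a > 0" "a\<^sup>2 = b\<^sup>2 + 1" by (simp_all add: a_def b_def)
  moreover have "2 * a * b \<le> a\<^sup>2 + b\<^sup>2"
    using sum_squares_bound[of a b] by simp
  ultimately have "1 / a \<le> 2 * a - 2 * b"
    by (simp add: field_simps power2_eq_square)
  with Suc.IH show ?case by (simp add: a_def b_def)
qed simp

text \<open>
  The first summand bounds \<open>sqrt (n / k)\<close> for \<open>k \<le> n\<close>, the others bound
  \<open>sqrt (k / n) \<le> 1 + k / n\<close> for \<open>k > n\<close>; with \<open>Suc k\<close> instead of \<open>k\<close> their Abel sum is
  the derivative of the geometric series.
\<close>

definition sqrt_weight :: "nat \<Rightarrow> nat \<Rightarrow> real" where
  "sqrt_weight n k = (if k \<le> n then sqrt (real n / real (max k 1)) else 0) + 1 + real (Suc k) / real n"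

lemma abel_mean_sqrt_weight_le:
  assumes "n > 0"
  shows "summable (\<lambda>k. sqrt_weight n k * (1 - 1 / real n) ^ k)"
    "abel_mean (sqrt_weight n) (1 - 1 / real n) \<le> 5"
proof -
  define x where "x = 1 - 1 / real n"
  have x: "0 \<le> x" "x < 1" "1 - x = 1 / real n"
    using assms by (auto simp: x_def field_simps)
  define head where "head k = (if k \<le> n then sqrt (real n / real (max k 1)) else 0)" for k
  have head_summable: "summable (\<lambda>k. head k * x ^ k)"
    by (rule summable_finite[of "{..n}"]) (auto simp: head_def)
  have "(\<Sum>k. head k * x ^ k) = (\<Sum>k\<le>n. head k * x ^ k)"
    by (rule suminf_finite) (auto simp: head_def)
  also have "\<dots> \<le> (\<Sum>k\<le>n. head k)"
    using x by (intro sum_mono mult_left_le) (auto simp: power_le_one head_def)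
  also have "\<dots> = (\<Sum>k\<le>n. sqrt (real n) * (1 / sqrt (real (max k 1))))"
    by (simp add: head_def real_sqrt_divide)
  also have "\<dots> \<le> sqrt (real n) * (1 + 2 * sqrt (real n))"
    unfolding sum_distrib_left[symmetric] by (intro mult_left_mono sum_inverse_sqrt_le) auto
  also have "\<dots> = sqrt (real n) + 2 * real n"
    by (simp add: algebra_simps)
  also have "\<dots> \<le> 3 * real n"
    using assms by (simp add: real_le_lsqrt real_sqrt_le_iff' power2_eq_square)
  finally have head_le: "(\<Sum>k. head k * x ^ k) \<le> 3 * real n" .
  have geom: "(\<lambda>k. 1 * x ^ k) sums real n"
    using geometric_sums[of x] x by simp
  have deriv: "(\<lambda>k. real (Suc k) / real n * x ^ k) sums real n"
    using sums_mult[OF geometric_deriv_sums[of x], of "1 / real n"] x assms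
    by (simp add: power2_eq_square field_simps)
  have "(\<lambda>k. head k * x ^ k + (1 * x ^ k + real (Suc k) / real n * x ^ k))
      sums ((\<Sum>k. head k * x ^ k) + (real n + real n))"
    by (intro sums_add summable_sums head_summable geom deriv)
  moreover have "sqrt_weight n k * x ^ k = head k * x ^ k + (1 * x ^ k + real (Suc k) / real n * x ^ k)" for k
    by (simp add: sqrt_weight_def head_def algebra_simps)
  ultimately have sums: "(\<lambda>k. sqrt_weight n k * x ^ k) sums ((\<Sum>k. head k * x ^ k) + 2 * real n)"
    by simp
  then show "summable (\<lambda>k. sqrt_weight n k * (1 - 1 / real n) ^ k)"
    by (auto simp: x_def sums_iff)
  have "abel_mean (sqrt_weight n) x = ((\<Sum>k. head k * x ^ k) + 2 * real n) / real n"
    using sums x by (simp add: abel_mean_def sums_iff)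
  also have "\<dots> \<le> 5"
    using head_le assms by (simp add: field_simps)
  finally show "abel_mean (sqrt_weight n) (1 - 1 / real n) \<le> 5"
    by (simp add: x_def)
qed

lemma abs_diff_le_sqrt_weight:
  assumes growth: "\<And>k n. N \<le> k \<Longrightarrow> k \<le> n \<Longrightarrow> \<bar>p n - p k\<bar> \<le> C * sqrt (real n / real k)"
    and "C \<ge> 0" "N > 0" "N \<le> n"
  shows "\<bar>p k - p n\<bar> \<le> (\<Sum>j<N. \<bar>p j - p N\<bar>) + C * sqrt_weight n k"
proof -
  have D: "0 \<le> (\<Sum>j<N. \<bar>p j - p N\<bar>)" by (simp add: sum_nonneg)
  have "\<bar>p k - p n\<bar> \<le> C * sqrt_weight n k" if "N \<le> k" "k \<le> n"
  proof -
    have "real (max k 1) = real k" using that \<open>N > 0\<close> by simp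
    then have "\<bar>p k - p n\<bar> \<le> C * sqrt (real n / real (max k 1))"
      using growth[OF that] by (simp add: abs_minus_commute)
    also have "\<dots> \<le> C * sqrt_weight n k"
      using that \<open>C \<ge> 0\<close> by (intro mult_left_mono) (auto simp: sqrt_weight_def)
    finally show ?thesis .
  qed
  moreover have "\<bar>p k - p n\<bar> \<le> C * sqrt_weight n k" if "n < k"
  proof -
    have "\<bar>p k - p n\<bar> \<le> C * sqrt (real k / real n)"
      using growth[of n k] that \<open>N \<le> n\<close> by simp
    also have "sqrt (real k / real n) \<le> 1 + real k / real n"
    proof (rule real_le_lsqrt)
      have "real k / real n \<le> 1 + 2 * (real k / real n)"
        using divide_nonneg_nonneg[of "real k" "real n"] by linarith
      also have "\<dots> \<le> (1 + real k / real n)\<^sup>2" by (simp add: power2_eq_square algebra_simps)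
      finally show "real k / real n \<le> (1 + real k / real n)\<^sup>2" .
    qed simp
    also have "\<dots> \<le> sqrt_weight n k"
      using that by (simp add: sqrt_weight_def divide_right_mono)
    finally show ?thesis using \<open>C \<ge> 0\<close> by (simp add: mult_left_mono)
  qed
  moreover have "\<bar>p k - p n\<bar> \<le> (\<Sum>j<N. \<bar>p j - p N\<bar>) + C * sqrt_weight n k" if "k < N"
  proof -
    have "\<bar>p k - p N\<bar> \<le> (\<Sum>j<N. \<bar>p j - p N\<bar>)"
      using that by (intro member_le_sum) auto
    moreover have "\<bar>p n - p N\<bar> \<le> C * sqrt_weight n k"
    proof -
      have "\<bar>p n - p N\<bar> \<le> C * sqrt (real n / real N)"
        using growth[of N n] \<open>N \<le> n\<close> by simp
      also have "\<dots> \<le> C * sqrt (real n / real (max k 1))"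
        using that \<open>C \<ge> 0\<close> by (intro mult_left_mono real_sqrt_le_mono divide_left_mono) auto
      also have "\<dots> \<le> C * sqrt_weight n k"
        using that \<open>N \<le> n\<close> \<open>C \<ge> 0\<close> by (intro mult_left_mono) (auto simp: sqrt_weight_def)
      finally show ?thesis .
    qed
    ultimately show ?thesis by linarith
  qed
  ultimately show ?thesis
    using D by (meson add_increasing not_le)
qed

lemma filterlim_one_minus_inverse_at_left_1: "filterlim (\<lambda>n. 1 - 1 / real n) (at_left 1) sequentially"
proof (rule tendsto_imp_filterlim_at_left)
  show "((\<lambda>n. 1 - 1 / real n) \<longlongrightarrow> 1) sequentially"
    using tendsto_diff[OF tendsto_const[of "1::real"] lim_inverse_n] by (simp add: divide_inverse)
  show "eventually (\<lambda>n. 1 - 1 / real n < 1) sequentially"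
    using eventually_gt_at_top[of 0] by eventually_elim simp
qed

lemma slowly_oscillating_abel_convergent_imp_Bseq:
  assumes "slowly_oscillating p" "abel_convergent_to p l"
  shows "Bseq p"
proof -
  obtain C N where "C > 0" "N > 0" and
    growth: "\<And>k n. N \<le> k \<Longrightarrow> k \<le> n \<Longrightarrow> \<bar>p n - p k\<bar> \<le> C * sqrt (real n / real k)"
    using slowly_oscillating_sqrt_growth[OF assms(1)] by blast
  define D where "D = (\<Sum>j<N. \<bar>p j - p N\<bar>)"
  have "D \<ge> 0" by (simp add: D_def sum_nonneg)
  have summable: "summable (\<lambda>k. p k * x ^ k)" if "0 \<le> x" "x < 1" for x
    using assms(2) that by (simp add: abel_convergent_to_iff)
  have near: "\<bar>abel_mean p (1 - 1 / real n) - p n\<bar> \<le> D + 5 * C" if "N \<le> n" for n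
  proof -
    define x where "x = 1 - 1 / real n"
    have "n > 0" using that \<open>N > 0\<close> by simp
    then have x: "0 \<le> x" "x < 1" by (auto simp: x_def)
    note weight = abel_mean_sqrt_weight_le[OF \<open>n > 0\<close>, folded x_def]
    note affine = abel_mean_affine[OF weight(1) x, of D C]
    have "abel_mean p x - p n = abel_mean (\<lambda>k. p k - p n) x"
      using abel_mean_diff[OF summable[OF x] summable_geometric_mult[OF x], of "p n"]
        abel_mean_const[OF x] by simp
    also have "\<bar>\<dots>\<bar> \<le> abel_mean (\<lambda>k. D + C * sqrt_weight n k) x"
      using abs_diff_le_sqrt_weight[OF growth _ \<open>N > 0\<close> that] \<open>C > 0\<close>
      by (intro abel_mean_abs_le(2) affine(1) x) (auto simp: D_def)
    also have "\<dots> \<le> D + C * 5"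
      using affine(2) weight(2) \<open>C > 0\<close> by simp
    finally show ?thesis by (simp add: x_def mult.commute)
  qed
  have "((\<lambda>n. abel_mean p (1 - 1 / real n)) \<longlongrightarrow> l) sequentially"
    using assms(2) filterlim_one_minus_inverse_at_left_1
    by (auto simp: abel_convergent_to_iff intro: filterlim_compose)
  then have "eventually (\<lambda>n. \<bar>abel_mean p (1 - 1 / real n) - l\<bar> < 1) sequentially"
    by (auto dest!: tendstoD[of _ _ _ 1] simp: dist_real_def)
  then have "eventually (\<lambda>n. norm (p n) \<le> norm (\<bar>l\<bar> + 1 + D + 5 * C)) sequentially"
    using eventually_ge_at_top[of N] by eventually_elim (use near \<open>C > 0\<close> \<open>D \<ge> 0\<close> in force)
  then show "Bseq p"
    by (rule Bseq_eventually_mono) simp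
qed

lemma abel_mean_sum:
  assumes "\<And>i. i \<in> I \<Longrightarrow> summable (\<lambda>k. a i k * x ^ k)"
  shows "summable (\<lambda>k. (\<Sum>i\<in>I. c i * a i k) * x ^ k)"
    "abel_mean (\<lambda>k. \<Sum>i\<in>I. c i * a i k) x = (\<Sum>i\<in>I. c i * abel_mean (a i) x)"
proof -
  have terms: "(\<Sum>i\<in>I. c i * a i k) * x ^ k = (\<Sum>i\<in>I. c i * (a i k * x ^ k))" for k
    by (simp add: sum_distrib_right mult.assoc)
  show "summable (\<lambda>k. (\<Sum>i\<in>I. c i * a i k) * x ^ k)"
    unfolding terms using assms by (intro summable_sum summable_mult)
  have "(\<Sum>k. \<Sum>i\<in>I. c i * (a i k * x ^ k)) = (\<Sum>i\<in>I. c i * (\<Sum>k. a i k * x ^ k))"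
    using assms by (subst suminf_sum) (auto intro: summable_mult simp: suminf_mult)
  then show "abel_mean (\<lambda>k. \<Sum>i\<in>I. c i * a i k) x = (\<Sum>i\<in>I. c i * abel_mean (a i) x)"
    by (simp add: abel_mean_def terms sum_distrib_left mult.left_commute)
qed

lemma abel_mean_monomial_weight:
  assumes "summable (\<lambda>k. s k * (x ^ Suc i) ^ k)" "0 \<le> x" "x < 1"
  shows "summable (\<lambda>k. s k * (x ^ k) ^ i * x ^ k)"
    "abel_mean (\<lambda>k. s k * (x ^ k) ^ i) x = abel_mean s (x ^ Suc i) / (\<Sum>j<Suc i. x ^ j)"
proof -
  have terms: "s k * (x ^ k) ^ i * x ^ k = s k * (x ^ Suc i) ^ k" for k
    by (metis power_Suc2 power_mult mult.commute mult.assoc)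
  show "summable (\<lambda>k. s k * (x ^ k) ^ i * x ^ k)"
    unfolding terms by (rule assms(1))
  have "(\<Sum>j<Suc i. x ^ j) \<ge> 1"
    using assms by (simp add: sum.lessThan_Suc_shift sum_nonneg del: sum.lessThan_Suc)
  then show "abel_mean (\<lambda>k. s k * (x ^ k) ^ i) x = abel_mean s (x ^ Suc i) / (\<Sum>j<Suc i. x ^ j)"
    unfolding abel_mean_def terms one_diff_power_eq[of x "Suc i"] by (simp add: field_simps)
qed

lemma filterlim_power_at_left_1: "filterlim (\<lambda>x::real. x ^ Suc i) (at_left 1) (at_left 1)"
proof (rule tendsto_imp_filterlim_at_left)
  show "((\<lambda>x::real. x ^ Suc i) \<longlongrightarrow> 1) (at_left 1)"
    using tendsto_power[OF tendsto_ident_at[of 1 "{..<1::real}"], of "Suc i"] by simp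
  show "eventually (\<lambda>x::real. x ^ Suc i < 1) (at_left 1)"
    using eventually_at_left_1 by eventually_elim (rule power_Suc_less_one; simp)
qed

lemma abel_mean_polynomial_weight_tendsto:
  assumes "abel_convergent_to s l"
  shows "((\<lambda>x. abel_mean (\<lambda>k. s k * (\<Sum>i\<le>d. c i * (x ^ k) ^ i)) x)
           \<longlongrightarrow> l * (\<Sum>i\<le>d. c i / real (Suc i))) (at_left 1)"
proof -
  have summable: "summable (\<lambda>k. s k * y ^ k)" if "0 \<le> y" "y < 1" for y
    using assms that by (simp add: abel_convergent_to_iff)
  have monomial: "((\<lambda>x. abel_mean s (x ^ Suc i) / (\<Sum>j<Suc i. x ^ j)) \<longlongrightarrow> l / real (Suc i)) (at_left 1)" for i
  proof -
    have "((\<lambda>x. abel_mean s (x ^ Suc i)) \<longlongrightarrow> l) (at_left 1)"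
      using assms filterlim_power_at_left_1
      by (auto simp: abel_convergent_to_iff intro: filterlim_compose)
    moreover have "((\<lambda>x::real. \<Sum>j<Suc i. x ^ j) \<longlongrightarrow> (\<Sum>j<Suc i. 1 ^ j)) (at_left 1)"
      by (intro tendsto_intros)
    ultimately show ?thesis
      by (auto intro!: tendsto_eq_intros)
  qed
  have "((\<lambda>x. \<Sum>i\<le>d. c i * (abel_mean s (x ^ Suc i) / (\<Sum>j<Suc i. x ^ j)))
          \<longlongrightarrow> (\<Sum>i\<le>d. c i * (l / real (Suc i)))) (at_left 1)"
    by (intro tendsto_sum tendsto_mult tendsto_const monomial)
  moreover have "eventually (\<lambda>x. (\<Sum>i\<le>d. c i * (abel_mean s (x ^ Suc i) / (\<Sum>j<Suc i. x ^ j)))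
      = abel_mean (\<lambda>k. s k * (\<Sum>i\<le>d. c i * (x ^ k) ^ i)) x) (at_left 1)"
    using eventually_at_left_1
  proof eventually_elim
    case (elim x)
    have "summable (\<lambda>k. s k * (x ^ Suc i) ^ k)" for i
      using elim by (intro summable power_Suc_less_one) auto
    note monomial = abel_mean_monomial_weight[OF this]
    have "abel_mean (\<lambda>k. \<Sum>i\<le>d. c i * (s k * (x ^ k) ^ i)) x
        = (\<Sum>i\<le>d. c i * abel_mean (\<lambda>k. s k * (x ^ k) ^ i) x)"
      using monomial(1) elim by (intro abel_mean_sum(2)) auto
    then show ?case
      using monomial(2) elim by (simp add: sum_distrib_left mult.left_commute)
  qed
  ultimately have "((\<lambda>x. abel_mean (\<lambda>k. s k * (\<Sum>i\<le>d. c i * (x ^ k) ^ i)) x)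
      \<longlongrightarrow> (\<Sum>i\<le>d. c i * (l / real (Suc i)))) (at_left 1)"
    by (rule Lim_transform_eventually)
  moreover have "(\<Sum>i\<le>d. c i * (l / real (Suc i))) = l * (\<Sum>i\<le>d. c i / real (Suc i))"
    by (simp add: sum_distrib_left mult.commute)
  ultimately show ?thesis by (simp only:)
qed

lemma abel_mean_weight_diff_le:
  assumes s: "\<And>k. \<bar>s k\<bar> \<le> M"
    and g: "\<And>t. t \<in> {0..1} \<Longrightarrow> \<bar>g t\<bar> \<le> G"
    and gh: "\<And>t. t \<in> {0..1} \<Longrightarrow> \<bar>g t - h t\<bar> \<le> \<eta>"
    and x: "0 \<le> x" "x < 1"
  shows "summable (\<lambda>k. s k * g (x ^ k) * x ^ k)"
    "\<bar>abel_mean (\<lambda>k. s k * g (x ^ k)) x - abel_mean (\<lambda>k. s k * h (x ^ k)) x\<bar> \<le> M * \<eta>"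
proof -
  have xk: "x ^ k \<in> {0..1}" for k
    using x by (simp add: power_le_one)
  have "0 \<le> M" "0 \<le> G"
    using s[of 0] g[of 0] by auto
  have "\<bar>s k * g (x ^ k)\<bar> \<le> M * G" for k
    unfolding abs_mult using s g[OF xk] \<open>0 \<le> M\<close> by (intro mult_mono) auto
  then show summable_g: "summable (\<lambda>k. s k * g (x ^ k) * x ^ k)"
    by (rule abel_mean_bounded(1)[OF _ x])
  have "\<bar>h t\<bar> \<le> G + \<eta>" if "t \<in> {0..1}" for t
    using g[OF that] gh[OF that] by linarith
  then have "\<bar>s k * h (x ^ k)\<bar> \<le> M * (G + \<eta>)" for k
    unfolding abs_mult using s xk \<open>0 \<le> M\<close> by (intro mult_mono) auto
  then have summable_h: "summable (\<lambda>k. s k * h (x ^ k) * x ^ k)"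
    by (rule abel_mean_bounded(1)[OF _ x])
  have "\<bar>s k * g (x ^ k) - s k * h (x ^ k)\<bar> \<le> M * \<eta>" for k
    unfolding right_diff_distrib[symmetric] abs_mult using s gh[OF xk] \<open>0 \<le> M\<close>
    by (intro mult_mono) auto
  then show "\<bar>abel_mean (\<lambda>k. s k * g (x ^ k)) x - abel_mean (\<lambda>k. s k * h (x ^ k)) x\<bar> \<le> M * \<eta>"
    unfolding abel_mean_diff[OF summable_g summable_h] by (rule abel_mean_bounded(2)[OF _ x])
qed

lemma abel_mean_continuous_weight_tendsto:
  assumes "abel_convergent_to s l" "\<And>k. \<bar>s k\<bar> \<le> M" "continuous_on {0..1} g"
  shows "((\<lambda>x. abel_mean (\<lambda>k. s k * g (x ^ k)) x - l * abel_mean (\<lambda>k. g (x ^ k)) x) \<longlongrightarrow> 0) (at_left 1)"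
proof (rule tendstoI)
  fix \<epsilon> :: real assume "\<epsilon> > 0"
  have "bounded (g ` {0..1})"
    by (intro compact_imp_bounded compact_continuous_image assms(3) compact_Icc)
  then obtain G where "\<forall>y\<in>g ` {0..1}. norm y \<le> G"
    unfolding bounded_iff by blast
  then have G: "\<And>t. t \<in> {0..1} \<Longrightarrow> \<bar>g t\<bar> \<le> G" by auto
  have "0 \<le> M" using assms(2)[of 0] by auto
  define K where "K = M + \<bar>l\<bar>"
  have "K \<ge> 0" using \<open>0 \<le> M\<close> by (simp add: K_def)
  define \<eta> where "\<eta> = \<epsilon> / (2 * (K + 1))"
  have "\<eta> > 0" using \<open>\<epsilon> > 0\<close> \<open>K \<ge> 0\<close> by (simp add: \<eta>_def)
  have "M * \<eta> + \<bar>l\<bar> * \<eta> = K * \<eta>"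
    by (simp add: K_def algebra_simps)
  also have "\<dots> = \<epsilon> / 2 * (K / (K + 1))"
    using \<open>K \<ge> 0\<close> by (simp add: \<eta>_def field_simps)
  also have "\<dots> \<le> \<epsilon> / 2"
    using \<open>\<epsilon> > 0\<close> \<open>K \<ge> 0\<close> by (intro mult_left_le) auto
  finally have "M * \<eta> + \<bar>l\<bar> * \<eta> \<le> \<epsilon> / 2" .
  obtain P where "real_polynomial_function P" and P: "\<And>t. t \<in> {0..1} \<Longrightarrow> \<bar>g t - P t\<bar> < \<eta>"
    using Stone_Weierstrass_real_polynomial_function[OF compact_Icc assms(3) \<open>\<eta> > 0\<close>] by blast
  then obtain c d where P_eq: "P = (\<lambda>t. \<Sum>i\<le>d. c i * t ^ i)"
    using real_polynomial_function_iff_sum by blast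
  have "((\<lambda>x. abel_mean (\<lambda>k. s k * P (x ^ k)) x - l * abel_mean (\<lambda>k. 1 * P (x ^ k)) x)
      \<longlongrightarrow> l * (\<Sum>i\<le>d. c i / real (Suc i)) - l * (1 * (\<Sum>i\<le>d. c i / real (Suc i)))) (at_left 1)"
    unfolding P_eq
    by (intro tendsto_diff tendsto_mult tendsto_const abel_mean_polynomial_weight_tendsto
        assms(1) abel_convergent_to_const)
  then have "eventually (\<lambda>x. \<bar>abel_mean (\<lambda>k. s k * P (x ^ k)) x - l * abel_mean (\<lambda>k. P (x ^ k)) x\<bar> < \<epsilon> / 2)
      (at_left 1)"
    using \<open>\<epsilon> > 0\<close> by (auto dest!: tendstoD[of _ _ _ "\<epsilon> / 2"] simp: dist_real_def)
  with eventually_at_left_1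
  show "eventually (\<lambda>x. dist (abel_mean (\<lambda>k. s k * g (x ^ k)) x - l * abel_mean (\<lambda>k. g (x ^ k)) x) 0 < \<epsilon>)
      (at_left 1)"
  proof eventually_elim
    case (elim x)
    have "\<bar>abel_mean (\<lambda>k. s k * g (x ^ k)) x - abel_mean (\<lambda>k. s k * P (x ^ k)) x\<bar> \<le> M * \<eta>"
      using abel_mean_weight_diff_le(2)[where g = g and G = G and h = P and \<eta> = \<eta>, OF assms(2) G]
        P elim by (simp add: less_imp_le)
    moreover have "\<bar>abel_mean (\<lambda>k. 1 * g (x ^ k)) x - abel_mean (\<lambda>k. 1 * P (x ^ k)) x\<bar> \<le> 1 * \<eta>"
      using abel_mean_weight_diff_le(2)[where s = "\<lambda>_. 1" and M = 1 and g = g and G = G and h = P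
          and \<eta> = \<eta>, OF _ G] P elim by (simp add: less_imp_le)
    then have "\<bar>l * abel_mean (\<lambda>k. g (x ^ k)) x - l * abel_mean (\<lambda>k. P (x ^ k)) x\<bar> \<le> \<bar>l\<bar> * \<eta>"
      by (simp add: right_diff_distrib[symmetric] abs_mult mult_left_mono)
    ultimately show ?case
      using elim \<open>M * \<eta> + \<bar>l\<bar> * \<eta> \<le> \<epsilon> / 2\<close> unfolding dist_real_def by linarith
  qed
qed

definition tent :: "real \<Rightarrow> real \<Rightarrow> real" where
  "tent \<delta> u = max 0 (min (u - 1) (1 + \<delta> - u))"

lemma tent_nonneg: "0 \<le> tent \<delta> u"
  by (simp add: tent_def)

lemma tent_le: "0 \<le> \<delta> \<Longrightarrow> tent \<delta> u \<le> \<delta>"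
  by (simp add: tent_def)

lemma tent_nonzero_imp: "tent \<delta> u \<noteq> 0 \<Longrightarrow> 1 < u \<and> u < 1 + \<delta>"
  by (auto simp: tent_def)

lemma one_minus_exp_inverse_ge:
  assumes "n > 0"
  shows "1 / (2 * real n) \<le> 1 - exp (- 1 / real n)"
proof -
  have "exp (- 1 / real n) = inverse (exp (1 / real n))"
    by (simp add: exp_minus)
  also have "\<dots> \<le> inverse (1 + 1 / real n)"
    by (rule le_imp_inverse_le) (auto intro: add_pos_nonneg exp_ge_add_one_self)
  also have "\<dots> = 1 - 1 / (real n + 1)"
    using assms by (simp add: field_simps)
  also have "\<dots> \<le> 1 - 1 / (2 * real n)"
    using assms by (intro diff_left_mono divide_left_mono) auto
  finally show ?thesis by simp
qed

lemma tent_exp_power_ge: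
  assumes "0 < \<delta>" "\<delta> \<le> 1" "8 \<le> real n * \<delta>"
    and m: "real n * \<delta> / 4 \<le> real m" "real m < real n * \<delta> / 4 + 1"
    and k: "n + m \<le> k" "k \<le> n + 2 * m"
  shows "\<delta> / 4 * exp (- 2) \<le> tent \<delta> (real k / real n) * exp (- 1 / real n) ^ k"
proof -
  have "n > 0" using assms by (auto intro: Nat.gr0I)
  define u where "u = real k / real n"
  have "(real n + real m) / real n \<le> u" "u \<le> (real n + 2 * real m) / real n"
    using k unfolding u_def by (auto intro!: divide_right_mono)
  moreover have "(real n + real m) / real n = 1 + real m / real n"
    "(real n + 2 * real m) / real n = 1 + 2 * real m / real n"
    using \<open>n > 0\<close> by (simp_all add: field_simps)
  moreover have "\<delta> / 4 \<le> real m / real n" "2 * real m / real n \<le> 3 / 4 * \<delta>"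
    using m assms \<open>n > 0\<close> by (auto simp: field_simps)
  ultimately have u: "1 + \<delta> / 4 \<le> u" "u \<le> 1 + 3 / 4 * \<delta>"
    by linarith+
  then have "\<delta> / 4 \<le> tent \<delta> u"
    by (simp add: tent_def)
  moreover have "exp (- 1 / real n) ^ k = exp (- u)"
    by (simp add: u_def flip: exp_of_nat_mult)
  then have "exp (- 2) \<le> exp (- 1 / real n) ^ k"
    using u assms by simp
  ultimately show ?thesis
    unfolding u_def by (intro mult_mono) (auto simp: tent_nonneg)
qed

lemma abel_mean_tent_ge:
  assumes "0 < \<delta>" "\<delta> \<le> 1" "8 \<le> real n * \<delta>"
  shows "summable (\<lambda>k. tent \<delta> (real k / real n) * exp (- 1 / real n) ^ k)"
    "exp (- 2) * \<delta>\<^sup>2 / 32 \<le> abel_mean (\<lambda>k. tent \<delta> (real k / real n)) (exp (- 1 / real n))"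
proof -
  define x where "x = exp (- 1 / real n)"
  have "n > 0" using assms by (auto intro: Nat.gr0I)
  then have x: "0 \<le> x" "x < 1" by (auto simp: x_def)
  define t where "t k = tent \<delta> (real k / real n) * x ^ k" for k
  have t_nonneg: "0 \<le> t k" for k
    using x by (simp add: t_def tent_nonneg)
  have "\<bar>tent \<delta> (real k / real n)\<bar> \<le> \<delta>" for k
    using assms by (simp add: tent_nonneg tent_le)
  then have summable: "summable t"
    unfolding t_def by (rule abel_mean_bounded(1)[OF _ x])
  then show "summable (\<lambda>k. tent \<delta> (real k / real n) * exp (- 1 / real n) ^ k)"
    unfolding t_def x_def .
  define m where "m = nat \<lceil>real n * \<delta> / 4\<rceil>"
  have m: "real n * \<delta> / 4 \<le> real m" "real m < real n * \<delta> / 4 + 1"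
    using assms ceiling_correct[of "real n * \<delta> / 4"] by (auto simp: m_def)
  have t_ge: "\<delta> / 4 * exp (- 2) \<le> t k" if "k \<in> {n + m..n + 2 * m}" for k
    using tent_exp_power_ge[OF assms m] that by (simp add: t_def x_def)
  have "real n * \<delta> / 4 * (\<delta> / 4 * exp (- 2)) \<le> real (card {n + m..n + 2 * m}) * (\<delta> / 4 * exp (- 2))"
    using m assms by (intro mult_right_mono) auto
  also have "\<dots> \<le> (\<Sum>k\<in>{n + m..n + 2 * m}. t k)"
    using t_ge by (rule sum_bounded_below)
  also have "\<dots> \<le> suminf t"
    using summable t_nonneg by (intro sum_le_suminf) auto
  finally have sum_ge: "real n * \<delta>\<^sup>2 / 16 * exp (- 2) \<le> suminf t"
    by (simp add: power2_eq_square algebra_simps)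
  have "exp (- 2) * \<delta>\<^sup>2 / 32 = 1 / (2 * real n) * (real n * \<delta>\<^sup>2 / 16 * exp (- 2))"
    using \<open>n > 0\<close> by (simp add: field_simps)
  also have "\<dots> \<le> (1 - x) * suminf t"
    using one_minus_exp_inverse_ge[OF \<open>n > 0\<close>] sum_ge \<open>n > 0\<close>
    by (intro mult_mono) (auto simp: x_def)
  also have "\<dots> = abel_mean (\<lambda>k. tent \<delta> (real k / real n)) x"
    unfolding abel_mean_def t_def ..
  finally show "exp (- 2) * \<delta>\<^sup>2 / 32 \<le> abel_mean (\<lambda>k. tent \<delta> (real k / real n)) (exp (- 1 / real n))"
    unfolding x_def .
qed

text \<open>
  Truncating at \<open>e^(-3)\<close> makes it continuous at \<open>t = 0\<close>
  and changes nothing for \<open>\<delta> \<le> 1\<close>, where the tent vanishes beyond \<open>u = 2\<close>.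
\<close>

definition tent_weight :: "real \<Rightarrow> real \<Rightarrow> real" where
  "tent_weight \<delta> t = tent \<delta> (- ln (max t (exp (- 3))))"

lemma continuous_on_tent_weight: "continuous_on A (tent_weight \<delta>)"
proof -
  have "continuous_on A (\<lambda>t. max 0 (min (- ln (max t (exp (- 3))) - 1) (1 + \<delta> - - ln (max t (exp (- 3))))))"
    by (intro continuous_intros) (auto simp: max_def)
  then show ?thesis by (simp add: tent_weight_def tent_def)
qed

lemma tent_weight_exp_power:
  assumes "\<delta> \<le> 1"
  shows "tent_weight \<delta> (exp (- 1 / real n) ^ k) = tent \<delta> (real k / real n)"
proof -
  have power: "exp (- 1 / real n) ^ k = exp (- (real k / real n))"
    by (simp flip: exp_of_nat_mult)
  show ?thesis
  proof (cases "real k / real n \<le> 3")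
    case True
    then show ?thesis unfolding tent_weight_def power by simp
  next
    case False
    then show ?thesis using assms unfolding tent_weight_def power by (simp add: tent_def)
  qed
qed

lemma filterlim_exp_minus_inverse_at_left_1: "filterlim (\<lambda>n. exp (- 1 / real n)) (at_left 1) sequentially"
proof (rule tendsto_imp_filterlim_at_left)
  have "((\<lambda>n. exp (- 1 / real n)) \<longlongrightarrow> exp (- 0)) sequentially"
    using tendsto_exp[OF tendsto_minus[OF lim_inverse_n]] by (simp add: divide_inverse)
  then show "((\<lambda>n. exp (- 1 / real n)) \<longlongrightarrow> 1) sequentially" by simp
  show "eventually (\<lambda>n. exp (- 1 / real n) < 1) sequentially"
    using eventually_gt_at_top[of 0] by eventually_elim simp
qed

lemma abel_mean_localized_weight:
  assumes "\<And>k. 0 \<le> w k" "\<And>k. w k \<noteq> 0 \<Longrightarrow> \<bar>s k - c\<bar> \<le> \<epsilon>"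
    and summable: "summable (\<lambda>k. w k * x ^ k)" "summable (\<lambda>k. s k * w k * x ^ k)"
    and x: "0 \<le> x" "x < 1"
  shows "\<bar>abel_mean (\<lambda>k. s k * w k) x - c * abel_mean w x\<bar> \<le> \<epsilon> * abel_mean w x"
proof -
  note cw = abel_mean_affine[OF summable(1) x, of 0 c]
  note \<epsilon>w = abel_mean_affine[OF summable(1) x, of 0 \<epsilon>]
  have "\<bar>s k * w k - c * w k\<bar> \<le> \<epsilon> * w k" for k
    using assms(1,2)[of k] by (cases "w k = 0") (auto simp: left_diff_distrib[symmetric] abs_mult mult_right_mono)
  then have "\<bar>abel_mean (\<lambda>k. s k * w k - c * w k) x\<bar> \<le> abel_mean (\<lambda>k. \<epsilon> * w k) x"
    using \<epsilon>w(1) x by (intro abel_mean_abs_le(2)) auto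
  moreover have "abel_mean (\<lambda>k. s k * w k) x - c * abel_mean w x = abel_mean (\<lambda>k. s k * w k - c * w k) x"
    using abel_mean_diff[OF summable(2) cw(1)] cw(2) by simp
  ultimately show ?thesis using \<epsilon>w(2) by simp
qed

definition tent_mean :: "real \<Rightarrow> (nat \<Rightarrow> real) \<Rightarrow> nat \<Rightarrow> real" where
  "tent_mean \<delta> s n = abel_mean (\<lambda>k. s k * tent \<delta> (real k / real n)) (exp (- 1 / real n))"

lemma tent_mean_tendsto:
  assumes "abel_convergent_to s l" "\<And>k. \<bar>s k\<bar> \<le> M" "\<delta> \<le> 1"
  shows "((\<lambda>n. tent_mean \<delta> s n - l * tent_mean \<delta> (\<lambda>_. 1) n) \<longlongrightarrow> 0) sequentially"
proof -
  have "((\<lambda>y. abel_mean (\<lambda>k. s k * tent_weight \<delta> (y ^ k)) y - l * abel_mean (\<lambda>k. tent_weight \<delta> (y ^ k)) y)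
      \<longlongrightarrow> 0) (at_left 1)"
    by (rule abel_mean_continuous_weight_tendsto[OF assms(1,2) continuous_on_tent_weight])
  from filterlim_compose[OF this filterlim_exp_minus_inverse_at_left_1]
  show ?thesis
    unfolding tent_mean_def tent_weight_exp_power[OF assms(3)] by simp
qed

lemma tent_mean_one_ge:
  assumes "0 < \<delta>" "\<delta> \<le> 1" "8 \<le> real n * \<delta>"
  shows "exp (- 2) * \<delta>\<^sup>2 / 32 \<le> tent_mean \<delta> (\<lambda>_. 1) n"
  using abel_mean_tent_ge(2)[OF assms] by (simp add: tent_mean_def)

lemma tent_mean_localized:
  assumes close: "\<And>k. n < k \<Longrightarrow> real k < (1 + \<delta>) * real n \<Longrightarrow> \<bar>s k - s n\<bar> \<le> \<epsilon>"
    and M: "\<And>k. \<bar>s k\<bar> \<le> M" and \<delta>: "0 < \<delta>" "\<delta> \<le> 1" "8 \<le> real n * \<delta>"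
  shows "\<bar>tent_mean \<delta> s n - s n * tent_mean \<delta> (\<lambda>_. 1) n\<bar> \<le> \<epsilon> * tent_mean \<delta> (\<lambda>_. 1) n"
proof -
  have "n > 0" using \<delta> by (auto intro: Nat.gr0I)
  have "0 \<le> M" using M[of 0] by (meson abs_ge_zero order_trans)
  have "\<bar>s k * tent \<delta> (real k / real n)\<bar> \<le> M * \<delta>" for k
    unfolding abs_mult using M \<delta> \<open>0 \<le> M\<close> by (intro mult_mono) (auto simp: tent_nonneg tent_le)
  then have "summable (\<lambda>k. s k * tent \<delta> (real k / real n) * exp (- 1 / real n) ^ k)"
    by (rule abel_mean_bounded(1)) (auto simp: \<open>n > 0\<close>)
  moreover have "\<bar>s k - s n\<bar> \<le> \<epsilon>" if "tent \<delta> (real k / real n) \<noteq> 0" for k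
    using tent_nonzero_imp[OF that] \<open>n > 0\<close> by (intro close) (auto simp: field_simps)
  ultimately show ?thesis
    unfolding tent_mean_def mult_1 using abel_mean_tent_ge(1)[OF \<delta>] \<open>n > 0\<close>
    by (intro abel_mean_localized_weight) (auto simp: tent_nonneg)
qed

lemma eventually_le_real_mult:
  assumes "\<delta> > 0"
  shows "eventually (\<lambda>n. a \<le> real n * \<delta>) sequentially"
proof -
  have "a \<le> real n * \<delta>" if "nat \<lceil>a / \<delta>\<rceil> \<le> n" for n
  proof -
    have "a / \<delta> \<le> real n"
      using real_nat_ceiling_ge[of "a / \<delta>"] that by (meson of_nat_le_iff order_trans)
    then show ?thesis using assms by (simp add: pos_divide_le_eq)
  qed
  then show ?thesis
    using eventually_ge_at_top[of "nat \<lceil>a / \<delta>\<rceil>"] by (auto elim: eventually_mono)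
qed

theorem slowly_oscillating_abel_tauberian:
  assumes oscillating: "slowly_oscillating s" and abel: "abel_convergent_to s l"
  shows "s \<longlonglongrightarrow> l"
proof -
  have "Bseq s"
    using slowly_oscillating_abel_convergent_imp_Bseq[OF assms] .
  then obtain M where M: "\<And>k. \<bar>s k\<bar> \<le> M"
    unfolding Bseq_def by auto
  have close: "eventually (\<lambda>n. \<bar>s n - l\<bar> \<le> 2 * \<epsilon>) sequentially" if "\<epsilon> > 0" for \<epsilon>
  proof -
    obtain \<delta>0 N0 where "\<delta>0 > 0" and
      osc: "\<And>n k. N0 \<le> n \<Longrightarrow> n \<le> k \<Longrightarrow> real k \<le> (1 + \<delta>0) * real n \<Longrightarrow> \<bar>s k - s n\<bar> < \<epsilon>"
      using oscillating \<open>\<epsilon> > 0\<close> unfolding slowly_oscillating_def by meson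
    define \<delta> where "\<delta> = min \<delta>0 1"
    have \<delta>: "0 < \<delta>" "\<delta> \<le> 1" "\<delta> \<le> \<delta>0"
      using \<open>\<delta>0 > 0\<close> by (auto simp: \<delta>_def)
    define c where "c = exp (- 2) * \<delta>\<^sup>2 / 32"
    have "c > 0" using \<delta> by (simp add: c_def)
    have "eventually (\<lambda>n. \<bar>tent_mean \<delta> s n - l * tent_mean \<delta> (\<lambda>_. 1) n\<bar> < \<epsilon> * c) sequentially"
      using tendstoD[OF tent_mean_tendsto[OF abel M \<delta>(2)], of "\<epsilon> * c"] \<open>\<epsilon> > 0\<close> \<open>c > 0\<close>
      by (simp add: dist_real_def)
    moreover have "eventually (\<lambda>n. N0 \<le> n \<and> 8 \<le> real n * \<delta>) sequentially"
      using eventually_ge_at_top[of N0] eventually_le_real_mult[OF \<delta>(1)] by (rule eventually_conj)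
    ultimately show ?thesis
    proof eventually_elim
      case (elim n)
      define W where "W = tent_mean \<delta> (\<lambda>_. 1) n"
      define S where "S = tent_mean \<delta> s n"
      have "c \<le> W"
        using tent_mean_one_ge[OF \<delta>(1,2)] elim by (simp add: W_def c_def)
      have "\<bar>S - s n * W\<bar> \<le> \<epsilon> * W"
        unfolding S_def W_def
      proof (rule tent_mean_localized[OF _ M \<delta>(1,2)])
        fix k assume "n < k" "real k < (1 + \<delta>) * real n"
        moreover have "(1 + \<delta>) * real n \<le> (1 + \<delta>0) * real n"
          using \<delta>(3) by (intro mult_right_mono) auto
        ultimately show "\<bar>s k - s n\<bar> \<le> \<epsilon>"
          using osc[of n k] elim by simp
      qed (use elim in simp)
      have "W > 0" using \<open>c \<le> W\<close> \<open>c > 0\<close> by linarith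
      have "(s n - l) * W = (s n * W - S) + (S - l * W)"
        by (simp add: algebra_simps)
      then have "\<bar>s n - l\<bar> * W = \<bar>(s n * W - S) + (S - l * W)\<bar>"
        using \<open>W > 0\<close> by (metis abs_mult abs_of_pos)
      also have "\<dots> \<le> \<epsilon> * W + \<epsilon> * c"
        using \<open>\<bar>S - s n * W\<bar> \<le> \<epsilon> * W\<close> elim by (simp add: S_def W_def)
      also have "\<dots> \<le> (2 * \<epsilon>) * W"
        using \<open>c \<le> W\<close> \<open>\<epsilon> > 0\<close> by (simp add: algebra_simps)
      finally show ?case
        using \<open>W > 0\<close> by simp
    qed
  qed
  show ?thesis
  proof (rule tendstoI)
    fix r :: real assume "r > 0"
    show "eventually (\<lambda>n. dist (s n) l < r) sequentially"
      using close[of "r / 3"] \<open>r > 0\<close> by (auto simp: dist_real_def elim: eventually_mono)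
  qed
qed

theorem corollary4:
  fixes f :: "real \<Rightarrow> real" and p :: "nat \<Rightarrow> real"
  assumes "abel_continuous f"
    and "slowly_oscillating p"
    and "abel_convergent p"
  shows "convergent (\<lambda>n. f (p n))"
proof -
  obtain l where "abel_convergent_to p l"
    using assms(3) unfolding abel_convergent_def by blast
  with assms(2) have "p \<longlonglongrightarrow> l"
    by (rule slowly_oscillating_abel_tauberian)
  then have "(\<lambda>n. f (p n)) \<longlonglongrightarrow> f l"
    by (rule isCont_tendsto_compose[OF isCont_if_abel_continuous[OF assms(1)]])
  then show ?thesis
    by (rule convergentI)
qed

end
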